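(* Let $K$ be a compact Hausdorff space and $F$ a closed subset of $K$. If $K$ satisfies the countable chain condition and $F$ admits an extension operator in $K$, then $F$ satisfies the countable chain condition.
   Context: A topological space satisfies the countable chain condition (ccc) if every family of pairwise disjoint nonempty open subsets is countable. $C(K)$ is the Banach space of real-valued continuous functions on $K$ with the supremum norm. An extension operator for $F$ in $K$ is a bounded linear map $E:C(F)\to C(K)$ with $E(f)|_F=f$ for all $f\in C(F)$. *)

theory Defs
  imports "HOL-Analysis.Analysis"
begin

definition ccc_space :: "'a topology \<Rightarrow> bool" where
  "ccc_space X \<longleftrightarrow>
     (\<forall>\<U>. (\<forall>U\<in>\<U>. openin X U \<and> U \<noteq> {}) \<and> pairwise disjnt \<U> \<longrightarrow> countable \<U>)"

text \<open>C(S) for S a subset of topspace X: continuous real functions on S (subspace topology),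
  represented extensionally (value 0 outside S), so that elements correspond exactly to
  continuous functions on S.\<close>
definition Cspace :: "'a topology \<Rightarrow> 'a set \<Rightarrow> ('a \<Rightarrow> real) set" where
  "Cspace X S = {f. continuous_map (subtopology X S) euclideanreal f \<and> (\<forall>x. x \<notin> S \<longrightarrow> f x = 0)}"

definition extension_operator :: "'a topology \<Rightarrow> 'a set \<Rightarrow> (('a \<Rightarrow> real) \<Rightarrow> ('a \<Rightarrow> real)) \<Rightarrow> bool" where
  "extension_operator X F E \<longleftrightarrow>
     (\<forall>f\<in>Cspace X F. E f \<in> Cspace X (topspace X)) \<and>
     (\<forall>f\<in>Cspace X F. \<forall>g\<in>Cspace X F. E (\<lambda>x. f x + g x) = (\<lambda>x. E f x + E g x)) \<and>
     (\<forall>f\<in>Cspace X F. \<forall>c::real. E (\<lambda>x. c * f x) = (\<lambda>x. c * E f x)) \<and>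
     (\<exists>M. \<forall>f\<in>Cspace X F. \<forall>B. (\<forall>y\<in>F. \<bar>f y\<bar> \<le> B) \<longrightarrow> (\<forall>x\<in>topspace X. \<bar>E f x\<bar> \<le> M * B)) \<and>
     (\<forall>f\<in>Cspace X F. \<forall>y\<in>F. E f y = f y)"

end

theory Submission
  imports Defs
begin

text \<open>For each member U of a disjoint family of nonempty relatively open subsets of F, choose a
  Urysohn function f_U on F with values in [0,1], supported in U and equal to 1 somewhere.
  Any finite sum of the f_U has sup norm at most 1, so its extension by the operator E is bounded
  by the norm M of E. Hence every point of K lies in at most 2M of the nonempty open sets
  {E f_U > 1/2}. In a ccc space a family of nonempty open sets of bounded order is countable:
  the nonempty intersections of exactly n+1 of them are pairwise disjoint, and discarding
  their (countably many) indices lowers the order.\<close>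

lemma ccc_space_countable_Union_full_intersections:
  assumes ccc: "ccc_space X"
    and opn: "\<forall>i\<in>I. openin X (V i)"
    and ord: "\<forall>x\<in>topspace X. finite {i\<in>I. x \<in> V i} \<and> card {i\<in>I. x \<in> V i} \<le> Suc n"
  shows "countable (\<Union>{S. S \<subseteq> I \<and> card S = Suc n \<and> \<Inter>(V ` S) \<noteq> {}})"
proof -
  define W where "W S = \<Inter>(V ` S)" for S
  define SS where "SS = {S. S \<subseteq> I \<and> card S = Suc n \<and> W S \<noteq> {}}"
  have SS: "finite S" "S \<noteq> {}" "S \<subseteq> I" "W S \<noteq> {}" if "S \<in> SS" for S
    using that unfolding SS_def by (auto intro: card_ge_0_finite)
  have SS_eq: "S = {i\<in>I. x \<in> V i}" if S: "S \<in> SS" and x: "x \<in> W S" for S x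
  proof (rule card_subset_eq)
    obtain i where "i \<in> S" using SS(2)[OF S] by blast
    then have "x \<in> topspace X"
      using x opn SS(3)[OF S] openin_subset unfolding W_def by blast
    then have "finite {i\<in>I. x \<in> V i}" and "card {i\<in>I. x \<in> V i} \<le> card S"
      using ord S unfolding SS_def by auto
    moreover have "S \<subseteq> {i\<in>I. x \<in> V i}" using SS(3)[OF S] x unfolding W_def by auto
    ultimately show "finite {i\<in>I. x \<in> V i}" "S \<subseteq> {i\<in>I. x \<in> V i}"
      "card S = card {i\<in>I. x \<in> V i}" by (auto intro: le_antisym card_mono)
  qed
  have "countable (W ` SS)"
  proof (rule ccc[unfolded ccc_space_def, rule_format], intro conjI ballI)
    fix U assume "U \<in> W ` SS"
    then obtain S where S: "S \<in> SS" "U = W S" by blast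
    with SS[OF S(1)] opn show "openin X U"
      unfolding \<open>U = W S\<close> W_def by (intro openin_INT2) auto
    show "U \<noteq> {}" using S SS by blast
  next
    show "pairwise disjnt (W ` SS)"
      unfolding pairwise_def disjnt_def using SS_eq by blast
  qed
  moreover have "inj_on W SS"
  proof (rule inj_onI)
    fix S T assume "S \<in> SS" "T \<in> SS" "W S = W T"
    moreover obtain x where "x \<in> W S" using SS(4)[OF \<open>S \<in> SS\<close>] by blast
    ultimately show "S = T" using SS_eq by metis
  qed
  ultimately have "countable SS"
    by (rule countable_image_inj_on)
  moreover have "countable S" if "S \<in> SS" for S
    using SS(1)[OF that] by (rule countable_finite)
  ultimately have "countable (\<Union>SS)"
    using countable_UN[of SS "\<lambda>S. S"] by simp
  then show ?thesis
    unfolding SS_def W_def .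
qed

lemma ccc_space_countable_of_bounded_order:
  assumes ccc: "ccc_space X"
    and "\<forall>i\<in>I. openin X (V i) \<and> V i \<noteq> {}"
    and "\<forall>x\<in>topspace X. finite {i\<in>I. x \<in> V i} \<and> card {i\<in>I. x \<in> V i} \<le> n"
  shows "countable I"
  using assms(2,3)
proof (induction n arbitrary: I)
  case 0
  have "I = {}"
  proof (rule ccontr)
    assume "I \<noteq> {}"
    then obtain i x where "i \<in> I" "x \<in> V i" using 0 by blast
    moreover have "x \<in> topspace X" using 0 calculation openin_subset by blast
    ultimately show False using 0 by auto
  qed
  then show ?case by simp
next
  case (Suc n)
  define J where "J = \<Union>{S. S \<subseteq> I \<and> card S = Suc n \<and> \<Inter>(V ` S) \<noteq> {}}"
  have "countable J"
    unfolding J_def using Suc.prems by (intro ccc_space_countable_Union_full_intersections[OF ccc]) auto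
  moreover have "countable (I - J)"
  proof (rule Suc.IH)
    show "\<forall>i\<in>I - J. openin X (V i) \<and> V i \<noteq> {}" using Suc.prems(1) by auto
    show "\<forall>x\<in>topspace X. finite {i \<in> I - J. x \<in> V i} \<and> card {i \<in> I - J. x \<in> V i} \<le> n"
    proof
      fix x assume x: "x \<in> topspace X"
      let ?S = "{i \<in> I - J. x \<in> V i}"
      have sub: "?S \<subseteq> {i\<in>I. x \<in> V i}" by auto
      have fin_x: "finite {i\<in>I. x \<in> V i}" and le_x: "card {i\<in>I. x \<in> V i} \<le> Suc n"
        using Suc.prems(2) x by auto
      have fin: "finite ?S" using finite_subset[OF sub fin_x] .
      have le: "card ?S \<le> Suc n" using card_mono[OF fin_x sub] le_x by linarith
      have "card ?S \<noteq> Suc n"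
      proof
        assume card: "card ?S = Suc n"
        then have "?S \<noteq> {}" by (metis card.empty nat.distinct(1))
        moreover have "x \<in> \<Inter>(V ` ?S)" by blast
        ultimately have "?S \<in> {S. S \<subseteq> I \<and> card S = Suc n \<and> \<Inter>(V ` S) \<noteq> {}}"
          using card by blast
        then have "?S \<subseteq> J" unfolding J_def by (rule Union_upper)
        then show False using \<open>?S \<noteq> {}\<close> by blast
      qed
      with fin le show "finite ?S \<and> card ?S \<le> n" by simp
    qed
  qed
  ultimately have "countable (J \<union> (I - J))" by (rule countable_Un)
  then show ?case by (rule countable_subset[rotated]) blast
qed

lemma Cspace_sum:
  assumes "finite T" and "\<forall>U\<in>T. g U \<in> Cspace X S"
  shows "(\<lambda>x. \<Sum>U\<in>T. g U x) \<in> Cspace X S"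
  using assms by (auto simp: Cspace_def intro!: continuous_map_sum)

lemma extension_operator_add:
  "\<lbrakk>extension_operator X F E; f \<in> Cspace X F; g \<in> Cspace X F\<rbrakk>
    \<Longrightarrow> E (\<lambda>x. f x + g x) = (\<lambda>x. E f x + E g x)"
  by (simp add: extension_operator_def)

lemma extension_operator_scale:
  "\<lbrakk>extension_operator X F E; f \<in> Cspace X F\<rbrakk> \<Longrightarrow> E (\<lambda>x. c * f x) = (\<lambda>x. c * E f x)"
  by (simp add: extension_operator_def)

lemma extension_operator_zero:
  assumes "extension_operator X F E"
  shows "E (\<lambda>x. 0) = (\<lambda>x. 0)"
  using extension_operator_scale[OF assms, of "\<lambda>x. 0" 0] by (simp add: Cspace_def)

lemma extension_operator_sum:
  assumes E: "extension_operator X F E" and "finite T" and "\<forall>U\<in>T. g U \<in> Cspace X F"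
  shows "E (\<lambda>x. \<Sum>U\<in>T. g U x) = (\<lambda>x. \<Sum>U\<in>T. E (g U) x)"
  using assms(2,3)
proof (induction T rule: finite_induct)
  case empty
  then show ?case using extension_operator_zero[OF E] by simp
next
  case (insert V T)
  have "g V \<in> Cspace X F" "(\<lambda>x. \<Sum>U\<in>T. g U x) \<in> Cspace X F"
    using insert by (auto intro: Cspace_sum)
  with insert show ?case by (simp add: extension_operator_add[OF E])
qed

lemma sum_disjoint_bumps_le_1:
  fixes f :: "'a set \<Rightarrow> 'a \<Rightarrow> real"
  assumes "finite T" and "pairwise disjnt T"
    and "\<forall>U\<in>T. \<forall>x. f U x \<le> 1 \<and> (x \<notin> U \<longrightarrow> f U x = 0)"
  shows "(\<Sum>U\<in>T. f U x) \<le> 1"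
proof -
  have "(\<Sum>U\<in>T. f U x) = (\<Sum>U\<in>{U\<in>T. x \<in> U}. f U x)"
    using assms by (intro sum.mono_neutral_right) auto
  also have "\<dots> \<le> of_nat (card {U\<in>T. x \<in> U}) * 1"
    using assms by (intro sum_bounded_above) auto
  also have "card {U\<in>T. x \<in> U} \<le> 1"
    using card_le_Suc0_iff_eq[of "{U\<in>T. x \<in> U}"] assms
    unfolding pairwise_def disjnt_def by auto
  finally show ?thesis by simp
qed

lemma Cspace_bump:
  assumes "completely_regular_space (subtopology X S)" and "openin (subtopology X S) U" and "y \<in> U"
  shows "\<exists>f\<in>Cspace X S. f y = 1 \<and> (\<forall>x. 0 \<le> f x \<and> f x \<le> 1 \<and> (x \<notin> U \<longrightarrow> f x = 0))"
proof -
  let ?Y = "subtopology X S"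
  obtain g where g: "continuous_map ?Y euclideanreal g" "g y = 1" "g ` (topspace ?Y - U) \<subseteq> {0}"
    using assms completely_regular_space_gen_alt'[of 1 0] by (metis zero_neq_one)
  define f where "f x = (if x \<in> U then max 0 (min (g x) 1) else 0)" for x
  have "continuous_map ?Y euclideanreal (\<lambda>x. max 0 (min (g x) 1))"
    using g(1) by (intro continuous_intros)
  then have "continuous_map ?Y euclideanreal f"
    by (rule continuous_map_eq) (use g(3) in \<open>auto simp: f_def\<close>)
  moreover have "U \<subseteq> S"
    using openin_subset[OF assms(2)] by auto
  ultimately have "f \<in> Cspace X S"
    by (auto simp: Cspace_def f_def)
  then show ?thesis
    using assms(3) g(2) by (intro bexI[of _ f]) (auto simp: f_def)
qed

lemma extension_operator_continuous:
  "\<lbrakk>extension_operator X F E; f \<in> Cspace X F\<rbrakk> \<Longrightarrow> continuous_map X euclideanreal (E f)"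
  by (simp add: extension_operator_def Cspace_def)

lemma extension_operator_restrict:
  "\<lbrakk>extension_operator X F E; f \<in> Cspace X F; y \<in> F\<rbrakk> \<Longrightarrow> E f y = f y"
  by (simp add: extension_operator_def)

lemma extension_operator_disjoint_bumps_bounded_overlap:
  assumes E: "extension_operator X F E" and disj: "pairwise disjnt \<U>"
    and bump: "\<forall>U\<in>\<U>. f U \<in> Cspace X F \<and> (\<forall>x. 0 \<le> f U x \<and> f U x \<le> 1 \<and> (x \<notin> U \<longrightarrow> f U x = 0))"
  shows "\<exists>n. \<forall>x\<in>topspace X.
           finite {U\<in>\<U>. 1/2 < E (f U) x} \<and> card {U\<in>\<U>. 1/2 < E (f U) x} \<le> n"
proof -
  obtain M where M: "\<forall>g\<in>Cspace X F. \<forall>B. (\<forall>y\<in>F. \<bar>g y\<bar> \<le> B) \<longrightarrow> (\<forall>x\<in>topspace X. \<bar>E g x\<bar> \<le> M * B)"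
    using E unfolding extension_operator_def by blast
  have card_le: "card T \<le> nat \<lceil>2 * M\<rceil>"
    if x: "x \<in> topspace X" and T: "T \<subseteq> {U\<in>\<U>. 1/2 < E (f U) x}" "finite T" for x T
  proof -
    have "T \<subseteq> \<U>" using T by auto
    then have fT: "\<forall>U\<in>T. f U \<in> Cspace X F" using bump by auto
    have "(\<Sum>U\<in>T. f U y) \<le> 1" for y
      using T bump pairwise_subset[OF disj \<open>T \<subseteq> \<U>\<close>] \<open>T \<subseteq> \<U>\<close>
      by (intro sum_disjoint_bumps_le_1) auto
    moreover have "0 \<le> (\<Sum>U\<in>T. f U y)" for y
      using T bump by (intro sum_nonneg) auto
    ultimately have "\<forall>y\<in>F. \<bar>\<Sum>U\<in>T. f U y\<bar> \<le> 1"
      by (metis abs_of_nonneg)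
    then have "\<bar>E (\<lambda>y. \<Sum>U\<in>T. f U y) x\<bar> \<le> M * 1"
      using M[rule_format, OF Cspace_sum[OF T(2) fT] _ x] by blast
    then have "(\<Sum>U\<in>T. E (f U) x) \<le> M"
      using extension_operator_sum[OF E T(2) fT] by simp
    moreover have "(\<Sum>U\<in>T. 1/2) \<le> (\<Sum>U\<in>T. E (f U) x)"
      using T by (intro sum_mono) auto
    ultimately have "real (card T) \<le> 2 * M"
      by simp
    then show ?thesis
      by (meson order_trans real_nat_ceiling_ge of_nat_le_iff)
  qed
  have "\<forall>x\<in>topspace X.
      finite {U\<in>\<U>. 1/2 < E (f U) x} \<and> card {U\<in>\<U>. 1/2 < E (f U) x} \<le> nat \<lceil>2 * M\<rceil>"
    using card_le by (intro ballI finite_if_finite_subsets_card_bdd)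
  then show ?thesis by (rule exI)
qed

lemma ccc_space_subtopology_extension_operator:
  assumes crs: "completely_regular_space X" and ccc: "ccc_space X" and E: "extension_operator X F E"
  shows "ccc_space (subtopology X F)"
  unfolding ccc_space_def
proof (intro allI impI)
  fix \<U> assume \<U>: "(\<forall>U\<in>\<U>. openin (subtopology X F) U \<and> U \<noteq> {}) \<and> pairwise disjnt \<U>"
  have "\<exists>f y. f \<in> Cspace X F \<and> y \<in> U \<and> f y = 1 \<and> (\<forall>x. 0 \<le> f x \<and> f x \<le> 1 \<and> (x \<notin> U \<longrightarrow> f x = 0))"
    if U: "U \<in> \<U>" for U
  proof -
    obtain y where "y \<in> U" using \<U> U by blast
    moreover have "openin (subtopology X F) U" using \<U> U by blast
    ultimately show ?thesis
      using Cspace_bump[OF completely_regular_space_subtopology[OF crs]] by blast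
  qed
  then obtain f y where bump: "\<forall>U\<in>\<U>. f U \<in> Cspace X F \<and> y U \<in> U \<and> f U (y U) = 1 \<and>
      (\<forall>x. 0 \<le> f U x \<and> f U x \<le> 1 \<and> (x \<notin> U \<longrightarrow> f U x = 0))"
    by metis
  define V where "V U = {x\<in>topspace X. E (f U) x \<in> {1/2<..}}" for U
  have V: "\<forall>U\<in>\<U>. openin X (V U) \<and> V U \<noteq> {}"
  proof (intro ballI conjI)
    fix U assume U: "U \<in> \<U>"
    show "openin X (V U)" unfolding V_def
      by (rule openin_continuous_map_preimage[OF extension_operator_continuous[OF E]])
        (use bump U in auto)
    have "y U \<in> topspace (subtopology X F)"
      using bump U \<U> openin_subset by blast
    then have "y U \<in> V U"
      using bump U extension_operator_restrict[OF E] unfolding V_def by auto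
    then show "V U \<noteq> {}" by blast
  qed
  have "pairwise disjnt \<U>" using \<U> by blast
  moreover have "\<forall>U\<in>\<U>. f U \<in> Cspace X F \<and> (\<forall>x. 0 \<le> f U x \<and> f U x \<le> 1 \<and> (x \<notin> U \<longrightarrow> f U x = 0))"
    using bump by blast
  ultimately obtain n where "\<forall>x\<in>topspace X.
      finite {U\<in>\<U>. 1/2 < E (f U) x} \<and> card {U\<in>\<U>. 1/2 < E (f U) x} \<le> n"
    using extension_operator_disjoint_bumps_bounded_overlap[OF E] by blast
  then have "\<forall>x\<in>topspace X. finite {U\<in>\<U>. x \<in> V U} \<and> card {U\<in>\<U>. x \<in> V U} \<le> n"
    by (simp add: V_def)
  with ccc V show "countable \<U>"
    by (rule ccc_space_countable_of_bounded_order)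
qed

theorem proposition3p15:
  fixes X :: "'a topology" and F :: "'a set"
  assumes "compact_space X" and "Hausdorff_space X"
    and "closedin X F"
    and "ccc_space X"
    and "\<exists>E. extension_operator X F E"
  shows "ccc_space (subtopology X F)"
proof -
  have "completely_regular_space X"
    using assms(1,2)
    by (intro normal_imp_completely_regular_space compact_Hausdorff_or_regular_imp_normal_space) auto
  moreover obtain E where "extension_operator X F E"
    using assms(5) by blast
  ultimately show ?thesis
    using assms(4) ccc_space_subtopology_extension_operator by blast
qed

end
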